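(* Let $r=\dfrac{4(3s^2-4s+2)}{s^2+4s+6}$ and $$y=\frac{(s+1)(7s^4+16s^3+4s^2-4)\,r}{s^3(s-2)(s^4-4s^2+32s-28)},\qquad t=\left(\frac{(s+1)^2\,r}{(s-2)^2s^2}\right)^2.$$ Then $y(t)$ is a solution of $\mathrm{P}_{\mathrm{VI}}$ with parameters $(\theta_1,\theta_2,\theta_3,\theta_4)=(1/3,1/2,1/2,2/3)$.
   Context: $\mathrm{P}_{\mathrm{VI}}$ is the equation $$\frac{d^2y}{dt^2}=\frac12\Big(\frac1y+\frac1{y-1}+\frac1{y-t}\Big)\Big(\frac{dy}{dt}\Big)^2-\Big(\frac1t+\frac1{t-1}+\frac1{y-t}\Big)\frac{dy}{dt}+\frac{y(y-1)(y-t)}{t^2(t-1)^2}\Big(\alpha+\beta\frac{t}{y^2}+\gamma\frac{t-1}{(y-1)^2}+\delta\frac{t(t-1)}{(y-t)^2}\Big),$$ with $\alpha=(\theta_4-1)^2/2$, $\beta=-\theta_1^2/2$, $\gamma=\theta_3^2/2$, $\delta=(1-\theta_2^2)/2$. When $y,t$ are given as rational functions of a parameter on a curve, derivatives with respect to $t$ are computed via the chain rule. *)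

theory Defs
  imports "HOL-Analysis.Analysis"
begin

definition PVI_rhs :: "complex \<Rightarrow> complex \<Rightarrow> complex \<Rightarrow> complex \<Rightarrow> complex \<Rightarrow> complex \<Rightarrow> complex \<Rightarrow> complex" where
  "PVI_rhs th1 th2 th3 th4 t y y' =
     (let \<alpha> = (th4 - 1)^2 / 2; \<beta> = - (th1^2) / 2; \<gamma> = th3^2 / 2; \<delta> = (1 - th2^2) / 2 in
      (1/2) * (1/y + 1/(y - 1) + 1/(y - t)) * y'^2
      - (1/t + 1/(t - 1) + 1/(y - t)) * y'
      + (y * (y - 1) * (y - t)) / (t^2 * (t - 1)^2)
        * (\<alpha> + \<beta> * t / y^2 + \<gamma> * (t - 1) / (y - 1)^2 + \<delta> * t * (t - 1) / (y - t)^2))"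

text \<open>A parametrized curve (T s, Y s) solves PVI at parameter s, derivatives in t
  computed via the chain rule: dy/dt = Y'/T', d^2y/dt^2 = (Y'' T' - Y' T'')/T'^3.\<close>
definition solves_PVI_at ::
  "complex \<Rightarrow> complex \<Rightarrow> complex \<Rightarrow> complex \<Rightarrow> (complex \<Rightarrow> complex) \<Rightarrow> (complex \<Rightarrow> complex) \<Rightarrow> complex \<Rightarrow> bool" where
  "solves_PVI_at th1 th2 th3 th4 T Y s \<longleftrightarrow>
     (let y1 = deriv Y s / deriv T s;
          y2 = (deriv (deriv Y) s * deriv T s - deriv Y s * deriv (deriv T) s) / (deriv T s)^3
      in y2 = PVI_rhs th1 th2 th3 th4 (T s) (Y s) y1)"

definition r10 :: "complex \<Rightarrow> complex" where
  "r10 s = 4 * (3 * s^2 - 4 * s + 2) / (s^2 + 4 * s + 6)"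

definition Y10 :: "complex \<Rightarrow> complex" where
  "Y10 s = (s + 1) * (7 * s^4 + 16 * s^3 + 4 * s^2 - 4) * r10 s /
           (s^3 * (s - 2) * (s^4 - 4 * s^2 + 32 * s - 28))"

definition T10 :: "complex \<Rightarrow> complex" where
  "T10 s = ((s + 1)^2 * r10 s / ((s - 2)^2 * s^2))^2"

end

theory Submission
  imports Defs "HOL-Computational_Algebra.Polynomial"
begin

(*
  Everything is rational in the parameter s. Away from the zeros of s, s - 2, Q = s^2 + 4s + 6 and
  P = s^4 - 4s^2 + 32s - 28, the functions Y10 and T10 and their first two derivatives are quotients
  of polynomials whose denominators are products of powers of these four factors; the numerators of
  the derivatives are certified by the quotient rule, read as polynomial identities.
  Multiplying P_VI by 2 y (y-1) (y-t) t^2 (t-1)^2 (dT/ds)^3 turns it into a polynomial relation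
  between y, t and the s-derivatives of Y and T. After substitution its four terms share the factor
  49152 (s+1)^12 R^6 / (s^36 (s-2)^30 Q^18 P^6), where R = 3s^2 - 4s + 2, and the remaining cofactor
  is a polynomial of degree 78 in s that vanishes identically.
*)

(* For simp only: the default simpset multiplies out products of coefficient-list literals
   instead of evaluating the factors separately. *)
lemmas poly_expand_simps =
  poly_mult poly_power poly_smult poly_add poly_diff poly_pCons poly_0
  pderiv_mult pderiv_power pderiv_smult pderiv_add pderiv_diff pderiv_pCons pderiv_0 pCons_0_0

lemma has_field_derivative_poly_quotient:
  fixes a b c d :: "'a::real_normed_field poly"
  assumes "open S" "x \<in> S" and f: "\<And>z. z \<in> S \<Longrightarrow> f z = poly a z / poly b z"
    and b: "poly b x \<noteq> 0" and d: "poly d x \<noteq> 0"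
    and reduced: "(pderiv a * b - a * pderiv b) * d = c * b^2"
  shows "(f has_field_derivative poly c x / poly d x) (at x)"
proof -
  have "((\<lambda>z. poly a z / poly b z) has_field_derivative
      (poly (pderiv a) x * poly b x - poly a x * poly (pderiv b) x) / (poly b x * poly b x)) (at x)"
    using b by (intro DERIV_divide poly_DERIV)
  also have "(poly (pderiv a) x * poly b x - poly a x * poly (pderiv b) x) / (poly b x * poly b x)
      = poly c x / poly d x"
    using arg_cong[OF reduced, of "\<lambda>p. poly p x"] b d
    by (simp add: field_simps power2_eq_square)
  finally show ?thesis
    using assms(1,2) f[symmetric] by (rule has_field_derivative_transform_within_open)
qed

lemma deriv_poly_quotient:
  fixes a b c d c2 d2 :: "'a::real_normed_field poly"
  assumes S: "open S" "x \<in> S" and f: "\<And>z. z \<in> S \<Longrightarrow> f z = poly a z / poly b z"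
    and nonzero: "\<And>z. z \<in> S \<Longrightarrow> poly b z \<noteq> 0 \<and> poly d z \<noteq> 0"
    and d2: "poly d2 x \<noteq> 0"
    and reduced: "(pderiv a * b - a * pderiv b) * d = c * b^2"
    and reduced2: "(pderiv c * d - c * pderiv d) * d2 = c2 * d^2"
  shows "deriv f x = poly c x / poly d x" and "deriv (deriv f) x = poly c2 x / poly d2 x"
proof -
  have f': "deriv f z = poly c z / poly d z" if "z \<in> S" for z
    using nonzero[OF that]
    by (intro DERIV_imp_deriv has_field_derivative_poly_quotient[OF S(1) that f _ _ reduced]) auto
  then show "deriv f x = poly c x / poly d x"
    using S(2) .
  show "deriv (deriv f) x = poly c2 x / poly d2 x"
    using nonzero[OF S(2)]
    by (intro DERIV_imp_deriv has_field_derivative_poly_quotient[OF S f' _ d2 reduced2]) auto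
qed

definition PVI_cleared ::
  "complex \<Rightarrow> complex \<Rightarrow> complex \<Rightarrow> complex \<Rightarrow>
    complex \<Rightarrow> complex \<Rightarrow> complex \<Rightarrow> complex \<Rightarrow> complex \<Rightarrow> complex" where
  "PVI_cleared th1 th2 th3 th4 t y w v z =
     2 * y * (y - 1) * (y - t) * t^2 * (t - 1)^2 * z
     - t^2 * (t - 1)^2 * ((y - 1) * (y - t) + y * (y - t) + y * (y - 1)) * w^2 * v
     + 2 * y * (y - 1) * t * (t - 1) * ((t - 1) * (y - t) + t * (y - t) + t * (t - 1)) * w * v^2
     - ((th4 - 1)^2 * y^2 * (y - 1)^2 * (y - t)^2 - th1^2 * t * (y - 1)^2 * (y - t)^2
        + th3^2 * (t - 1) * y^2 * (y - t)^2 + (1 - th2^2) * t * (t - 1) * y^2 * (y - 1)^2) * v^3"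

lemma PVI_cleared_eq:
  fixes t y w v z :: complex
  assumes "y \<noteq> 0" "y \<noteq> 1" "y \<noteq> t" "t \<noteq> 0" "t \<noteq> 1" "v \<noteq> 0"
  shows "PVI_cleared th1 th2 th3 th4 t y w v z
    = 2 * y * (y - 1) * (y - t) * t^2 * (t - 1)^2 * v^3
      * (z / v^3 - PVI_rhs th1 th2 th3 th4 t y (w / v))"
proof -
  define a b c where "a = y - 1" and "b = y - t" and "c = t - 1"
  have nz: "y \<noteq> 0" "a \<noteq> 0" "b \<noteq> 0" "t \<noteq> 0" "c \<noteq> 0" "v \<noteq> 0"
    using assms by (auto simp: a_def b_def c_def)
  define L where "L = 2 * y * a * b * t^2 * c^2 * v^3"
  have second_deriv_term: "L * (z / v^3) = 2 * y * a * b * t^2 * c^2 * z"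
    unfolding L_def using nz by (simp add: field_simps)
  have quadratic_term:
    "L * ((1/2) * (1/y + 1/a + 1/b) * (w / v)^2) = t^2 * c^2 * (a * b + y * b + y * a) * w^2 * v"
    unfolding L_def using nz by (simp add: field_simps) algebra
  have linear_term:
    "L * ((1/t + 1/c + 1/b) * (w / v)) = 2 * y * a * t * c * (c * b + t * b + t * c) * w * v^2"
    unfolding L_def using nz by (simp add: field_simps) algebra
  have potential_term: "L * ((y * a * b) / (t^2 * c^2)
        * ((th4 - 1)^2 / 2 + (- (th1^2) / 2) * t / y^2 + th3^2 / 2 * c / a^2
           + (1 - th2^2) / 2 * t * c / b^2))
      = ((th4 - 1)^2 * y^2 * a^2 * b^2 - th1^2 * t * a^2 * b^2 + th3^2 * c * y^2 * b^2
          + (1 - th2^2) * t * c * y^2 * a^2) * v^3"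
    unfolding L_def using nz by (simp add: field_simps) algebra
  show ?thesis
    unfolding PVI_cleared_def PVI_rhs_def Let_def a_def[symmetric] b_def[symmetric] c_def[symmetric]
      L_def[symmetric] second_deriv_term[symmetric] quadratic_term[symmetric]
      linear_term[symmetric] potential_term[symmetric]
    by (simp only: right_diff_distrib distrib_left) (simp add: algebra_simps)
qed

lemma solves_PVI_at_iff_cleared:
  assumes "T s \<noteq> 0" "T s \<noteq> 1" "Y s \<noteq> 0" "Y s \<noteq> 1" "Y s \<noteq> T s" "deriv T s \<noteq> 0"
  shows "solves_PVI_at th1 th2 th3 th4 T Y s \<longleftrightarrow>
    PVI_cleared th1 th2 th3 th4 (T s) (Y s) (deriv Y s) (deriv T s)
      (deriv (deriv Y) s * deriv T s - deriv Y s * deriv (deriv T) s) = 0"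
  using assms by (simp add: solves_PVI_at_def Let_def PVI_cleared_eq)

(* Here s, m, p stand for s, s - 2, s + 1 and Q, P, R, G for the factors of the curve; they are
   kept independent so that the field computations treat them as atoms. *)
lemma PVI_cleared_reduction:
  fixes s m p Q P R G Ny1 Nt1 Nyt DY DT DDY DDT y t dy dt ddy ddt :: complex
  assumes nz: "s \<noteq> 0" "m \<noteq> 0" "Q \<noteq> 0" "P \<noteq> 0"
    and y: "y = 4 * p * R * G / (s^3 * m * Q * P)"
    and y_1: "y - 1 = Ny1 / (s^3 * m * Q * P)"
    and t: "t = 16 * p^4 * R^2 / (s^4 * m^4 * Q^2)"
    and t_1: "t - 1 = Nt1 / (s^4 * m^4 * Q^2)"
    and y_t: "y - t = p * R * Nyt / (s^4 * m^4 * Q^2 * P)"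
    and dy: "dy = DY / (s^4 * m^2 * Q^2 * P^2)"
    and dt: "dt = 192 * p^3 * R * DT / (s^5 * m^5 * Q^3)"
    and ddy: "ddy = DDY / (s^5 * m^3 * Q^3 * P^3)"
    and ddt: "ddt = 192 * p^2 * DDT / (s^6 * m^6 * Q^4)"
    and K: "8 * G * Ny1 * Nyt * Nt1^2 * (DDY * p * R * DT - DY * P * DDT)
      - DT * Nt1^2 * ((Ny1 + 4 * p * R * G) * Nyt + 4 * G * Ny1 * s * m^3 * Q) * DY^2
      + 96 * P * DT^2 * G * Ny1 * Nt1 * ((Nt1 + 16 * p^4 * R^2) * Nyt + 16 * p^3 * R * Nt1 * P) * DY
      - DT^3 * p * R * s * m * Q * (256 * G^2 * Ny1^2 * Nyt^2 * m^2
          - 256 * p^2 * Ny1^2 * Nyt^2 * s^2 * P^2 + 576 * G^2 * Nt1 * Nyt^2 * s^2 * P^2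
          + 27648 * p^2 * Nt1 * G^2 * Ny1^2 * m^2 * P^2) = 0"
      (is "?X1 - ?X2 + ?X3 - ?X4 = 0")
  shows "PVI_cleared (1/3) (1/2) (1/2) (2/3) t y dy dt (ddy * dt - dy * ddt) = 0"
proof -
  define F where "F = 49152 * p^12 * R^6 / (s^36 * m^30 * Q^18 * P^6)"
  have second_deriv_term:
    "2 * y * (y - 1) * (y - t) * t^2 * (t - 1)^2 * (ddy * dt - dy * ddt) = F * ?X1"
    unfolding y_1 y_t t_1 dy dt ddy ddt unfolding y t F_def using nz
    by (simp add: field_simps) algebra
  have quadratic_term:
    "t^2 * (t - 1)^2 * ((y - 1) * (y - t) + y * (y - t) + y * (y - 1)) * dy^2 * dt = F * ?X2"
    unfolding y_1 y_t t_1 dy dt unfolding y t F_def using nz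
    by (simp add: field_simps) algebra
  have linear_term:
    "2 * y * (y - 1) * t * (t - 1) * ((t - 1) * (y - t) + t * (y - t) + t * (t - 1)) * dy * dt^2
      = F * ?X3"
    unfolding y_1 y_t t_1 dy dt unfolding y t F_def using nz
    by (simp add: field_simps) algebra
  have potential_term:
    "((2/3 - 1)^2 * y^2 * (y - 1)^2 * (y - t)^2 - (1/3)^2 * t * (y - 1)^2 * (y - t)^2
        + (1/2)^2 * (t - 1) * y^2 * (y - t)^2 + (1 - (1/2)^2) * t * (t - 1) * y^2 * (y - 1)^2)
      * dt^3 = F * ?X4"
    unfolding y_1 y_t t_1 dt unfolding y t F_def using nz
    by (simp add: field_simps) algebra
  have "PVI_cleared (1/3) (1/2) (1/2) (2/3) t y dy dt (ddy * dt - dy * ddt)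
      = F * (?X1 - ?X2 + ?X3 - ?X4)"
    unfolding PVI_cleared_def second_deriv_term quadratic_term linear_term potential_term
    by (simp only: right_diff_distrib distrib_left)
  with K show ?thesis
    by simp
qed

definition Q10 :: "complex poly" where "Q10 = [:6, 4, 1:]"
definition P10 :: "complex poly" where "P10 = [:-28, 32, -4, 0, 1:]"
definition R10 :: "complex poly" where "R10 = [:2, -4, 3:]"
definition G10 :: "complex poly" where "G10 = [:-4, 0, 4, 16, 7:]"

definition Y10_num :: "complex poly" where "Y10_num = smult 4 ([:1, 1:] * R10 * G10)"
definition Y10_den :: "complex poly" where "Y10_den = [:0, 1:]^3 * [:-2, 1:] * Q10 * P10"
definition T10_num :: "complex poly" where "T10_num = smult 16 ([:1, 1:]^4 * R10^2)"
definition T10_den :: "complex poly" where "T10_den = [:0, 1:]^4 * [:-2, 1:]^4 * Q10^2"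

(* The numerators of the derivatives were computed by computer algebra; curve10_quotient_rule
   certifies them. *)
definition dY10_num :: "complex poly" where
  "dY10_num = [:32256, -63488, 3840, 49152, -7808, -53760, 175296, 12288, -87648, -13440, 976, 3072,
     -120, -992, -252:]"
definition dY10_den :: "complex poly" where "dY10_den = [:0, 1:]^4 * [:-2, 1:]^2 * Q10^2 * P10^2"
definition d2Y10_num :: "complex poly" where
  "d2Y10_num = [:-43352064, 127475712, -88121344, -57667584, 70520832, 4247552, 76333056, -872448,
     -79794176, 7658496, -2503680, 23594496, -2993664, -8423424, 2441216, 2059008, 142464, -96224,
     -32544, 6672, 5968, 1008:]"
definition d2Y10_den :: "complex poly" where "d2Y10_den = [:0, 1:]^5 * [:-2, 1:]^3 * Q10^3 * P10^3"
definition dT10_fac :: "complex poly" where "dT10_fac = [:8, -8, 4, -8, -2, -2, -1:]"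
definition dT10_num :: "complex poly" where "dT10_num = smult 192 ([:1, 1:]^3 * R10 * dT10_fac)"
definition dT10_den :: "complex poly" where "dT10_den = [:0, 1:]^5 * [:-2, 1:]^5 * Q10^3"
definition d2T10_fac :: "complex poly" where
  "d2T10_fac = [:960, -1856, 1120, -448, 784, -928, 592, 128, 388, 476, 134, 60, 15:]"
definition d2T10_num :: "complex poly" where "d2T10_num = smult 192 ([:1, 1:]^2 * d2T10_fac)"
definition d2T10_den :: "complex poly" where "d2T10_den = [:0, 1:]^6 * [:-2, 1:]^6 * Q10^4"

lemmas curve10_poly_defs = Q10_def P10_def R10_def G10_def
  Y10_num_def Y10_den_def T10_num_def T10_den_def
  dY10_num_def dY10_den_def d2Y10_num_def d2Y10_den_def
  dT10_fac_def dT10_num_def dT10_den_def d2T10_fac_def d2T10_num_def d2T10_den_def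

lemma curve10_quotient_rule:
  "(pderiv Y10_num * Y10_den - Y10_num * pderiv Y10_den) * dY10_den = dY10_num * Y10_den^2"
  "(pderiv dY10_num * dY10_den - dY10_num * pderiv dY10_den) * d2Y10_den = d2Y10_num * dY10_den^2"
  "(pderiv T10_num * T10_den - T10_num * pderiv T10_den) * dT10_den = dT10_num * T10_den^2"
  "(pderiv dT10_num * dT10_den - dT10_num * pderiv dT10_den) * d2T10_den = d2T10_num * dT10_den^2"
  by (simp_all only: poly_eq_poly_eq_iff[symmetric] curve10_poly_defs fun_eq_iff poly_expand_simps)
    (simp, algebra)+

lemma poly_curve10_factors:
  "poly [:0, 1:] z = z" "poly [:-2, 1:] z = z - 2" "poly [:1, 1:] z = z + 1"
  "poly Q10 z = z^2 + 4 * z + 6" "poly P10 z = z^4 - 4 * z^2 + 32 * z - 28"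
  "poly R10 z = 3 * z^2 - 4 * z + 2" "poly G10 z = 7 * z^4 + 16 * z^3 + 4 * z^2 - 4"
  by (simp_all add: Q10_def P10_def R10_def G10_def) algebra+

lemmas poly_curve10_simps = poly_mult poly_power poly_smult poly_curve10_factors
  Y10_num_def Y10_den_def T10_num_def T10_den_def dY10_den_def d2Y10_den_def
  dT10_num_def dT10_den_def d2T10_num_def d2T10_den_def

lemma curve10_eq_quotient:
  fixes z :: complex
  assumes "z \<noteq> 0" "z \<noteq> 2" "z^2 + 4 * z + 6 \<noteq> 0" "z^4 - 4 * z^2 + 32 * z - 28 \<noteq> 0"
  shows "Y10 z = poly Y10_num z / poly Y10_den z" and "T10 z = poly T10_num z / poly T10_den z"
proof -
  show "Y10 z = poly Y10_num z / poly Y10_den z"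
    unfolding poly_curve10_simps using assms by (simp add: Y10_def r10_def field_simps)
  have "T10 z = (4 * (z + 1)^2 * (3 * z^2 - 4 * z + 2) / (z^2 * (z - 2)^2 * (z^2 + 4 * z + 6)))^2"
    unfolding T10_def r10_def using assms
    by (intro arg_cong[where f = "\<lambda>x. x^2"]) (simp add: field_simps)
  then show "T10 z = poly T10_num z / poly T10_den z"
    unfolding poly_curve10_simps
    by (simp add: power_divide power_mult_distrib power_mult[symmetric])
qed

lemma curve10_derivatives:
  fixes s :: complex
  assumes "s \<noteq> 0" "s \<noteq> 2" "s^2 + 4 * s + 6 \<noteq> 0" "s^4 - 4 * s^2 + 32 * s - 28 \<noteq> 0"
  shows "deriv Y10 s = poly dY10_num s / poly dY10_den s"
    and "deriv (deriv Y10) s = poly d2Y10_num s / poly d2Y10_den s"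
    and "deriv T10 s = poly dT10_num s / poly dT10_den s"
    and "deriv (deriv T10) s = poly d2T10_num s / poly d2T10_den s"
proof -
  define S where "S = {z :: complex. z \<noteq> 0 \<and> z \<noteq> 2 \<and> z^2 + 4 * z + 6 \<noteq> 0
    \<and> z^4 - 4 * z^2 + 32 * z - 28 \<noteq> 0}"
  have S: "open S" "s \<in> S"
    unfolding S_def using assms
    by (auto intro!: open_Collect_conj open_Collect_neq continuous_intros)
  have nonzero: "poly Y10_den z \<noteq> 0 \<and> poly dY10_den z \<noteq> 0 \<and> poly d2Y10_den z \<noteq> 0
      \<and> poly T10_den z \<noteq> 0 \<and> poly dT10_den z \<noteq> 0 \<and> poly d2T10_den z \<noteq> 0" if "z \<in> S" for z
    using that unfolding S_def poly_curve10_simps by simp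
  have quotients:
    "Y10 z = poly Y10_num z / poly Y10_den z" "T10 z = poly T10_num z / poly T10_den z"
    if "z \<in> S" for z
    using that unfolding S_def by (auto intro: curve10_eq_quotient)
  show "deriv Y10 s = poly dY10_num s / poly dY10_den s"
    "deriv (deriv Y10) s = poly d2Y10_num s / poly d2Y10_den s"
    using nonzero[OF S(2)] nonzero
    by (intro deriv_poly_quotient[OF S quotients(1) _ _ curve10_quotient_rule(1,2)]; simp)+
  show "deriv T10 s = poly dT10_num s / poly dT10_den s"
    "deriv (deriv T10) s = poly d2T10_num s / poly d2T10_den s"
    using nonzero[OF S(2)] nonzero
    by (intro deriv_poly_quotient[OF S quotients(2) _ _ curve10_quotient_rule(3,4)]; simp)+
qed

lemma PVI_cleared_curve10:
  fixes s :: complex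
  assumes "s \<noteq> 0" "s \<noteq> 2" "s^2 + 4 * s + 6 \<noteq> 0" "s^4 - 4 * s^2 + 32 * s - 28 \<noteq> 0"
  shows "PVI_cleared (1/3) (1/2) (1/2) (2/3) (T10 s) (Y10 s) (deriv Y10 s) (deriv T10 s)
      (deriv (deriv Y10) s * deriv T10 s - deriv Y10 s * deriv (deriv T10) s) = 0"
proof -
  define m p Q P R G where "m = s - 2" and "p = s + 1" and "Q = s^2 + 4 * s + 6"
    and "P = s^4 - 4 * s^2 + 32 * s - 28" and "R = 3 * s^2 - 4 * s + 2"
    and "G = 7 * s^4 + 16 * s^3 + 4 * s^2 - 4"
  have nz: "s \<noteq> 0" "m \<noteq> 0" "Q \<noteq> 0" "P \<noteq> 0"
    using assms by (simp_all add: m_def Q_def P_def)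
  have y: "Y10 s = 4 * p * R * G / (s^3 * m * Q * P)"
    and t: "T10 s = 16 * p^4 * R^2 / (s^4 * m^4 * Q^2)"
    using curve10_eq_quotient[OF assms]
    unfolding poly_curve10_simps m_def p_def Q_def P_def R_def G_def by simp_all
  show ?thesis
  proof (rule PVI_cleared_reduction[OF nz y _ t])
    show "Y10 s - 1 = (4 * p * R * G - s^3 * m * Q * P) / (s^3 * m * Q * P)"
      unfolding y using nz by (simp add: field_simps)
    show "T10 s - 1 = (16 * p^4 * R^2 - s^4 * m^4 * Q^2) / (s^4 * m^4 * Q^2)"
      unfolding t using nz by (simp add: field_simps)
    show "Y10 s - T10 s = p * R * (4 * G * s * m^3 * Q - 16 * p^3 * R * P) / (s^4 * m^4 * Q^2 * P)"
      unfolding y t using nz by (simp add: field_simps) algebra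
    show "deriv Y10 s = poly dY10_num s / (s^4 * m^2 * Q^2 * P^2)"
      "deriv (deriv Y10) s = poly d2Y10_num s / (s^5 * m^3 * Q^3 * P^3)"
      "deriv T10 s = 192 * p^3 * R * poly dT10_fac s / (s^5 * m^5 * Q^3)"
      "deriv (deriv T10) s = 192 * p^2 * poly d2T10_fac s / (s^6 * m^6 * Q^4)"
      unfolding curve10_derivatives[OF assms] poly_curve10_simps m_def p_def Q_def P_def R_def
      by simp_all
    \<comment> \<open>The remaining goal is the vanishing of the degree-78 cofactor.\<close>
  qed (unfold m_def p_def Q_def P_def R_def G_def
      dY10_num_def d2Y10_num_def dT10_fac_def d2T10_fac_def, simp only: poly_pCons poly_0, algebra)
qed

theorem mainTheorem10:
  fixes s :: complex
  assumes "s \<noteq> 0" and "s \<noteq> 2"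
    and "s^2 + 4 * s + 6 \<noteq> 0"
    and "s^4 - 4 * s^2 + 32 * s - 28 \<noteq> 0"
    and "deriv T10 s \<noteq> 0"
    and "T10 s \<noteq> 0" and "T10 s \<noteq> 1"
    and "Y10 s \<noteq> 0" and "Y10 s \<noteq> 1" and "Y10 s \<noteq> T10 s"
  shows "solves_PVI_at (1/3) (1/2) (1/2) (2/3) T10 Y10 s"
  using PVI_cleared_curve10[OF assms(1-4)] assms(5-10)
  by (simp add: solves_PVI_at_iff_cleared)

end
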